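(* Let $\mathbb{H}$ be a Hilbert space with norm $\|\cdot\|$ and let $\mathcal{D}=\{\phi_j\}_{j\in\mathbb{N}^*}$ be an orthonormal basis of $\mathbb{H}$; set $\mathcal{D}_p=\{\phi_1,\dots,\phi_p\}$. Let $1<q<2$, $r>0$, $R>0$ and $f\in w\mathcal{L}_q(R)\cap\mathcal{B}^r_{2,\infty}(R)$. For $p\in\mathbb{N}^*$ and $\beta>0$ let $$f_{p,\beta}=\arg\min_{h\in\mathcal{L}_1(\mathcal{D}_p)}\big(\|f-h\|^2+\beta\|h\|_{\mathcal{L}_1(\mathcal{D}_p)}\big).$$ Then there exists $C_q>0$ depending only on $q$ such that for all $p\in\mathbb{N}^*$ and $\beta>0$, $$\|f_{p,\beta}\|_{\mathcal{L}_1(\mathcal{D}_p)}\le C_qR^q\beta^{1-q}\quad\text{and}\quad\|f-f_{p,\beta}\|\le R(p+1)^{-r}+\sqrt{C_q}\,R^{q/2}\beta^{1-q/2}.$$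
   Context: $\mathcal{L}_1(\mathcal{D}_p)$ is the span of $\phi_1,\dots,\phi_p$ with norm $\|h\|_{\mathcal{L}_1(\mathcal{D}_p)}=\inf\{\sum_{j=1}^p|\theta_j|:h=\sum_j\theta_j\phi_j\}$. Writing $g=\sum_{j\ge1}\theta_j\phi_j$: $g\in\mathcal{B}^r_{2,\infty}(R)$ iff $\sup_{J\in\mathbb{N}^*}\big(J^{2r}\sum_{j\ge J}\theta_j^2\big)\le R^2$; $g\in w\mathcal{L}_q(R)$ iff $\sup_{\eta>0}\big(\eta^q\sum_{j\ge1}\mathbf{1}\{|\theta_j|>\eta\}\big)\le R^q$. *)

theory Defs
  imports "HOL-Analysis.Analysis"
begin

text \<open>The basis is indexed by the positive integers: only phi j with j >= 1 is used.\<close>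

definition orthonormal_basis :: "(nat \<Rightarrow> 'a::{real_inner,complete_space}) \<Rightarrow> bool" where
  "orthonormal_basis \<phi> \<longleftrightarrow>
     (\<forall>i\<ge>1. \<forall>j\<ge>1. \<phi> i \<bullet> \<phi> j = (if i = j then 1 else 0)) \<and>
     closure (span (\<phi> ` {1..})) = UNIV"

definition L1_space :: "(nat \<Rightarrow> 'a::real_inner) \<Rightarrow> nat \<Rightarrow> 'a set" where
  "L1_space \<phi> p = {(\<Sum>j=1..p. \<theta> j *\<^sub>R \<phi> j) | \<theta>. True}"

definition L1_norm :: "(nat \<Rightarrow> 'a::real_inner) \<Rightarrow> nat \<Rightarrow> 'a \<Rightarrow> real" where
  "L1_norm \<phi> p h = Inf {(\<Sum>j=1..p. \<bar>\<theta> j\<bar>) | \<theta>. h = (\<Sum>j=1..p. \<theta> j *\<^sub>R \<phi> j)}"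

definition besov_ball :: "(nat \<Rightarrow> 'a::real_inner) \<Rightarrow> real \<Rightarrow> real \<Rightarrow> 'a \<Rightarrow> bool" where
  "besov_ball \<phi> r R g \<longleftrightarrow>
     (\<forall>J::nat\<ge>1. real J powr (2 * r) * (\<Sum>k. (g \<bullet> \<phi> (k + J))\<^sup>2) \<le> R\<^sup>2)"

text \<open>Weak L_q ball wL_q(R); the counting number must be finite (otherwise it is infinite).\<close>

definition weak_Lq_ball :: "(nat \<Rightarrow> 'a::real_inner) \<Rightarrow> real \<Rightarrow> real \<Rightarrow> 'a \<Rightarrow> bool" where
  "weak_Lq_ball \<phi> q R g \<longleftrightarrow>
     (\<forall>\<eta>>0. finite {j. j \<ge> 1 \<and> \<bar>g \<bullet> \<phi> j\<bar> > \<eta>} \<and>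
            \<eta> powr q * real (card {j. j \<ge> 1 \<and> \<bar>g \<bullet> \<phi> j\<bar> > \<eta>}) \<le> R powr q)"

definition is_L1_penalized_min ::
  "(nat \<Rightarrow> 'a::real_inner) \<Rightarrow> nat \<Rightarrow> real \<Rightarrow> 'a \<Rightarrow> 'a \<Rightarrow> bool" where
  "is_L1_penalized_min \<phi> p \<beta> f h \<longleftrightarrow>
     h \<in> L1_space \<phi> p \<and>
     (\<forall>h'\<in>L1_space \<phi> p. (norm (f - h))\<^sup>2 + \<beta> * L1_norm \<phi> p h
                            \<le> (norm (f - h'))\<^sup>2 + \<beta> * L1_norm \<phi> p h')"

end

theory Submission
  imports Defs
begin

text \<open>
  In the coordinates \<open>\<theta>\<^sub>j = f \<bullet> \<phi> j\<close> the penalised problem decouples into scalar problems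
  \<open>min\<^sub>x (\<theta>\<^sub>j - x)\<^sup>2 + \<beta> \<bar>x\<bar>\<close>, whose minimiser (soft thresholding) vanishes unless
  \<open>\<bar>\<theta>\<^sub>j\<bar> > \<beta>/2\<close>, has modulus at most \<open>2 \<bar>\<theta>\<^sub>j\<bar>\<close>, and leaves a residual at most
  \<open>min \<theta>\<^sub>j\<^sup>2 \<beta>\<^sup>2\<close>. Summing these bounds over dyadic level sets of \<open>\<bar>\<theta>\<^sub>j\<bar>\<close>, the weak \<open>L\<^sub>q\<close>
  condition \<open>#{j. \<bar>\<theta>\<^sub>j\<bar> > \<eta>} \<le> R\<^sup>q \<eta>\<^sup>-\<^sup>q\<close> turns both sums into convergent geometric series
  (because \<open>1 < q < 2\<close>), giving the \<open>L\<^sub>1\<close> bound and the bound on the error within \<open>D\<^sub>p\<close>.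
  The error outside \<open>D\<^sub>p\<close> is the tail \<open>\<Sum>\<^sub>j\<^sub>>\<^sub>p \<theta>\<^sub>j\<^sup>2\<close>, controlled by the Besov condition.
\<close>

definition orthonormal_seq :: "(nat \<Rightarrow> 'a::real_inner) \<Rightarrow> bool" where
  "orthonormal_seq \<phi> \<longleftrightarrow> (\<forall>i\<ge>1. \<forall>j\<ge>1. \<phi> i \<bullet> \<phi> j = (if i = j then 1 else 0))"

lemma orthonormal_basis_imp_orthonormal_seq: "orthonormal_basis \<phi> \<Longrightarrow> orthonormal_seq \<phi>"
  by (simp add: orthonormal_basis_def orthonormal_seq_def)

lemma inner_sum_orthonormal_seq:
  assumes "orthonormal_seq \<phi>" "finite S" "S \<subseteq> {1..}" "i \<ge> 1"
  shows "(\<Sum>j\<in>S. c j *\<^sub>R \<phi> j) \<bullet> \<phi> i = (if i \<in> S then c i else 0)"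
proof -
  have "(\<Sum>j\<in>S. c j *\<^sub>R \<phi> j) \<bullet> \<phi> i = (\<Sum>j\<in>S. c j * (\<phi> j \<bullet> \<phi> i))"
    by (simp add: inner_sum_left)
  also have "\<dots> = (\<Sum>j\<in>S. if j = i then c j else 0)"
    using assms by (intro sum.cong) (auto simp: orthonormal_seq_def)
  finally show ?thesis
    using assms(2) by (simp add: sum.delta)
qed

lemma norm_diff_expansion_sq:
  assumes "orthonormal_seq \<phi>" "finite S" "S \<subseteq> {1..}"
  shows "(norm (f - (\<Sum>j\<in>S. c j *\<^sub>R \<phi> j)))\<^sup>2 =
     (norm f)\<^sup>2 - (\<Sum>j\<in>S. (f \<bullet> \<phi> j)\<^sup>2) + (\<Sum>j\<in>S. (f \<bullet> \<phi> j - c j)\<^sup>2)"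
proof -
  define v where "v = (\<Sum>j\<in>S. c j *\<^sub>R \<phi> j)"
  have fv: "f \<bullet> v = (\<Sum>j\<in>S. c j * (f \<bullet> \<phi> j))"
    by (simp add: v_def inner_sum_right)
  have "v \<bullet> v = v \<bullet> (\<Sum>j\<in>S. c j *\<^sub>R \<phi> j)"
    by (simp only: v_def)
  also have "\<dots> = (\<Sum>j\<in>S. c j * (v \<bullet> \<phi> j))"
    by (simp add: inner_sum_right)
  also have "\<dots> = (\<Sum>j\<in>S. c j * c j)"
  proof (rule sum.cong)
    fix j
    assume "j \<in> S"
    with assms show "c j * (v \<bullet> \<phi> j) = c j * c j"
      unfolding v_def by (subst inner_sum_orthonormal_seq) auto
  qed simp
  finally have vv: "v \<bullet> v = (\<Sum>j\<in>S. c j * c j)" .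
  have "(norm (f - v))\<^sup>2 = (norm f)\<^sup>2 - 2 * (f \<bullet> v) + v \<bullet> v"
    by (simp add: power2_norm_eq_inner inner_diff inner_commute)
  also have "\<dots> = (norm f)\<^sup>2 - (\<Sum>j\<in>S. (f \<bullet> \<phi> j)\<^sup>2) + (\<Sum>j\<in>S. (f \<bullet> \<phi> j - c j)\<^sup>2)"
    by (simp add: fv vv power2_eq_square algebra_simps sum.distrib sum_subtractf sum_distrib_left)
  finally show ?thesis
    by (simp add: v_def)
qed

lemma bessel_inequality:
  assumes "orthonormal_seq \<phi>" "finite S" "S \<subseteq> {1..}"
  shows "(\<Sum>j\<in>S. (f \<bullet> \<phi> j)\<^sup>2) \<le> (norm f)\<^sup>2"
  using norm_diff_expansion_sq[OF assms, of f "\<lambda>j. f \<bullet> \<phi> j"]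
    zero_le_power2[of "norm (f - (\<Sum>j\<in>S. (f \<bullet> \<phi> j) *\<^sub>R \<phi> j))"]
  by simp

lemma expansion_coeff_eq:
  assumes "orthonormal_seq \<phi>" "(\<Sum>i=1..p. a i *\<^sub>R \<phi> i) = (\<Sum>i=1..p. b i *\<^sub>R \<phi> i)"
    "j \<in> {1..p}"
  shows "a j = b j"
proof -
  have "a j = (\<Sum>i=1..p. a i *\<^sub>R \<phi> i) \<bullet> \<phi> j"
    using assms(3) inner_sum_orthonormal_seq[OF assms(1), of "{1..p}" j a] by auto
  also have "\<dots> = b j"
    using assms(2,3) inner_sum_orthonormal_seq[OF assms(1), of "{1..p}" j b] by auto
  finally show ?thesis .
qed

text \<open>By uniqueness of coefficients the infimum defining \<open>L1_norm\<close> ranges over a singleton.\<close>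

lemma L1_norm_expansion:
  assumes "orthonormal_seq \<phi>"
  shows "L1_norm \<phi> p (\<Sum>j=1..p. c j *\<^sub>R \<phi> j) = (\<Sum>j=1..p. \<bar>c j\<bar>)"
proof -
  have "{(\<Sum>j=1..p. \<bar>\<theta> j\<bar>) | \<theta>. (\<Sum>j=1..p. c j *\<^sub>R \<phi> j) = (\<Sum>j=1..p. \<theta> j *\<^sub>R \<phi> j)}
      = {\<Sum>j=1..p. \<bar>c j\<bar>}"
  proof (intro equalityI subsetI)
    fix x
    assume "x \<in> {(\<Sum>j=1..p. \<bar>\<theta> j\<bar>) | \<theta>. (\<Sum>j=1..p. c j *\<^sub>R \<phi> j) = (\<Sum>j=1..p. \<theta> j *\<^sub>R \<phi> j)}"
    then obtain \<theta> where x: "x = (\<Sum>j=1..p. \<bar>\<theta> j\<bar>)"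
      and eq: "(\<Sum>j=1..p. c j *\<^sub>R \<phi> j) = (\<Sum>j=1..p. \<theta> j *\<^sub>R \<phi> j)"
      by blast
    have "(\<Sum>j=1..p. \<bar>\<theta> j\<bar>) = (\<Sum>j=1..p. \<bar>c j\<bar>)"
      using expansion_coeff_eq[OF assms eq] by (intro sum.cong) auto
    with x show "x \<in> {\<Sum>j=1..p. \<bar>c j\<bar>}"
      by simp
  qed blast
  then show ?thesis
    by (simp add: L1_norm_def)
qed

lemma orthonormal_basis_partial_energy_approx:
  assumes basis: "orthonormal_basis \<phi>" and "0 < \<delta>"
  obtains N where "(norm f)\<^sup>2 \<le> (\<Sum>j=1..N. (f \<bullet> \<phi> j)\<^sup>2) + \<delta>"
proof -
  have ON: "orthonormal_seq \<phi>"
    using basis by (rule orthonormal_basis_imp_orthonormal_seq)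
  have "f \<in> closure (span (\<phi> ` {1..}))"
    using basis by (simp add: orthonormal_basis_def)
  moreover have "0 < sqrt \<delta>"
    using \<open>0 < \<delta>\<close> by simp
  ultimately obtain v where "v \<in> span (\<phi> ` {1..})" and "dist v f < sqrt \<delta>"
    unfolding closure_approachable by blast
  then obtain B u where B: "finite B" "B \<subseteq> \<phi> ` {1..}" and vB: "v = (\<Sum>x\<in>B. u x *\<^sub>R x)"
    by (auto simp: span_explicit)
  obtain I where I: "I \<subseteq> {1..}" "finite I" "B = \<phi> ` I"
    using finite_subset_image[OF B] by blast
  have "inj_on \<phi> I"
  proof
    fix i j
    assume "i \<in> I" "j \<in> I" "\<phi> i = \<phi> j"
    then have "\<phi> i \<bullet> \<phi> j = \<phi> i \<bullet> \<phi> i" by simp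
    with ON \<open>i \<in> I\<close> \<open>j \<in> I\<close> I(1) show "i = j"
      unfolding orthonormal_seq_def by (metis atLeast_iff subsetD zero_neq_one)
  qed
  then have vI: "v = (\<Sum>j\<in>I. u (\<phi> j) *\<^sub>R \<phi> j)"
    using vB I(3) by (simp add: sum.reindex)
  define N where "N = Max (insert 0 I)"
  have "I \<subseteq> {1..N}"
    using I by (auto simp: N_def)
  define d where "d j = (if j \<in> I then u (\<phi> j) else 0)" for j
  have "(\<Sum>j=1..N. d j *\<^sub>R \<phi> j) = (\<Sum>j=1..N. if j \<in> I then u (\<phi> j) *\<^sub>R \<phi> j else 0)"
    by (intro sum.cong) (auto simp: d_def)
  also have "\<dots> = (\<Sum>j\<in>{1..N} \<inter> I. u (\<phi> j) *\<^sub>R \<phi> j)"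
    by (simp add: sum.inter_restrict)
  also have "{1..N} \<inter> I = I"
    using \<open>I \<subseteq> {1..N}\<close> by auto
  finally have "v = (\<Sum>j=1..N. d j *\<^sub>R \<phi> j)"
    using vI by simp
  then have "(norm (f - v))\<^sup>2 = (norm f)\<^sup>2 - (\<Sum>j=1..N. (f \<bullet> \<phi> j)\<^sup>2) + (\<Sum>j=1..N. (f \<bullet> \<phi> j - d j)\<^sup>2)"
    by (simp only:) (rule norm_diff_expansion_sq[OF ON]; auto)
  moreover have "(norm (f - v))\<^sup>2 < \<delta>"
  proof -
    have "norm (f - v) < sqrt \<delta>"
      using \<open>dist v f < sqrt \<delta>\<close> by (simp add: dist_norm norm_minus_commute)
    then have "(norm (f - v))\<^sup>2 < (sqrt \<delta>)\<^sup>2"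
      by (intro power_strict_mono) auto
    with \<open>0 < \<delta>\<close> show ?thesis
      by simp
  qed
  moreover have "0 \<le> (\<Sum>j=1..N. (f \<bullet> \<phi> j - d j)\<^sup>2)"
    by (intro sum_nonneg) auto
  ultimately show thesis
    using that[of N] by linarith
qed

lemma orthonormal_basis_coeff_sq_sums:
  assumes basis: "orthonormal_basis \<phi>"
  shows "(\<lambda>k. (f \<bullet> \<phi> (Suc k))\<^sup>2) sums (norm f)\<^sup>2"
proof -
  have partial: "(\<Sum>k<n. (f \<bullet> \<phi> (Suc k))\<^sup>2) = (\<Sum>j=1..n. (f \<bullet> \<phi> j)\<^sup>2)" for n
    by (simp add: sum.atLeast1_atMost_eq)
  have "(\<lambda>n. \<Sum>j=1..n. (f \<bullet> \<phi> j)\<^sup>2) \<longlonglongrightarrow> (norm f)\<^sup>2"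
  proof (rule increasing_LIMSEQ)
    show "(\<Sum>j=1..n. (f \<bullet> \<phi> j)\<^sup>2) \<le> (norm f)\<^sup>2" for n
      using basis by (intro bessel_inequality orthonormal_basis_imp_orthonormal_seq) auto
    show "\<exists>n. (norm f)\<^sup>2 \<le> (\<Sum>j=1..n. (f \<bullet> \<phi> j)\<^sup>2) + e" if e: "0 < e" for e
    proof -
      obtain N where "(norm f)\<^sup>2 \<le> (\<Sum>j=1..N. (f \<bullet> \<phi> j)\<^sup>2) + e"
        using orthonormal_basis_partial_energy_approx[OF basis e] .
      then show ?thesis ..
    qed
  qed simp
  then show ?thesis
    by (simp add: sums_def partial)
qed

lemma orthonormal_basis_tail_sum:
  assumes "orthonormal_basis \<phi>"
  shows "(\<Sum>k. (f \<bullet> \<phi> (k + (p + 1)))\<^sup>2) = (norm f)\<^sup>2 - (\<Sum>j=1..p. (f \<bullet> \<phi> j)\<^sup>2)"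
  using sums_split_initial_segment[OF orthonormal_basis_coeff_sq_sums[OF assms], where n = p]
  by (simp add: sums_iff sum.atLeast1_atMost_eq)

lemma penalized_min_coordinatewise:
  assumes ON: "orthonormal_seq \<phi>" and min: "is_L1_penalized_min \<phi> p \<beta> f (\<Sum>j=1..p. c j *\<^sub>R \<phi> j)"
    and i: "i \<in> {1..p}"
  shows "(f \<bullet> \<phi> i - c i)\<^sup>2 + \<beta> * \<bar>c i\<bar> \<le> (f \<bullet> \<phi> i - d)\<^sup>2 + \<beta> * \<bar>d\<bar>"
proof -
  define g where "g j x = (f \<bullet> \<phi> j - x)\<^sup>2 + \<beta> * \<bar>x\<bar>" for j x
  have sub: "{1..p} \<subseteq> {1::nat..}"
    by auto
  have objective: "(norm (f - (\<Sum>j=1..p. a j *\<^sub>R \<phi> j)))\<^sup>2 + \<beta> * L1_norm \<phi> p (\<Sum>j=1..p. a j *\<^sub>R \<phi> j)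
      = (norm f)\<^sup>2 - (\<Sum>j=1..p. (f \<bullet> \<phi> j)\<^sup>2) + (g i (a i) + (\<Sum>j\<in>{1..p}-{i}. g j (a j)))" for a
  proof -
    have "(\<Sum>j=1..p. g j (a j)) = g i (a i) + (\<Sum>j\<in>{1..p}-{i}. g j (a j))"
      using i by (simp add: sum.remove)
    then show ?thesis
      unfolding L1_norm_expansion[OF ON] norm_diff_expansion_sq[OF ON finite_atLeastAtMost sub]
      by (simp add: g_def sum.distrib sum_distrib_left)
  qed
  have "(\<Sum>j=1..p. (c(i:=d)) j *\<^sub>R \<phi> j) \<in> L1_space \<phi> p"
    unfolding L1_space_def by blast
  with min have "(norm (f - (\<Sum>j=1..p. c j *\<^sub>R \<phi> j)))\<^sup>2 + \<beta> * L1_norm \<phi> p (\<Sum>j=1..p. c j *\<^sub>R \<phi> j)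
      \<le> (norm (f - (\<Sum>j=1..p. (c(i:=d)) j *\<^sub>R \<phi> j)))\<^sup>2 + \<beta> * L1_norm \<phi> p (\<Sum>j=1..p. (c(i:=d)) j *\<^sub>R \<phi> j)"
    unfolding is_L1_penalized_min_def by blast
  then have "g i (c i) + (\<Sum>j\<in>{1..p}-{i}. g j (c j))
      \<le> g i ((c(i:=d)) i) + (\<Sum>j\<in>{1..p}-{i}. g j ((c(i:=d)) j))"
    unfolding objective by simp
  also have "(\<Sum>j\<in>{1..p}-{i}. g j ((c(i:=d)) j)) = (\<Sum>j\<in>{1..p}-{i}. g j (c j))"
    by (intro sum.cong) auto
  finally show ?thesis
    by (simp add: g_def)
qed

lemma scalar_lasso_abs_le:
  fixes \<theta> c \<beta> :: real
  assumes "0 < \<beta>" and min: "(\<theta> - c)\<^sup>2 + \<beta> * \<bar>c\<bar> \<le> \<theta>\<^sup>2"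
  shows "\<bar>c\<bar> \<le> 2 * (if \<bar>\<theta>\<bar> > \<beta> / 2 then \<bar>\<theta>\<bar> else 0)"
proof -
  have "\<theta> * c \<le> \<bar>\<theta>\<bar> * \<bar>c\<bar>"
    by (metis abs_ge_self abs_mult)
  with min have "\<bar>c\<bar> * (\<bar>c\<bar> + \<beta> - 2 * \<bar>\<theta>\<bar>) \<le> 0"
    by (simp add: power2_eq_square algebra_simps)
  then have "c = 0 \<or> \<bar>c\<bar> + \<beta> \<le> 2 * \<bar>\<theta>\<bar>"
    by (auto simp: mult_le_0_iff)
  with \<open>0 < \<beta>\<close> show ?thesis
    by auto
qed

lemma scalar_lasso_residual_le:
  fixes \<theta> c \<beta> :: real
  assumes "0 < \<beta>" and min: "\<And>d. (\<theta> - c)\<^sup>2 + \<beta> * \<bar>c\<bar> \<le> (\<theta> - d)\<^sup>2 + \<beta> * \<bar>d\<bar>"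
  shows "(\<theta> - c)\<^sup>2 \<le> min (\<theta>\<^sup>2) (\<beta>\<^sup>2)"
proof -
  have "0 \<le> \<beta> * \<bar>c\<bar>"
    using \<open>0 < \<beta>\<close> by simp
  with min[of 0] have "(\<theta> - c)\<^sup>2 \<le> \<theta>\<^sup>2"
    by simp
  moreover have "\<bar>\<theta> - c\<bar> \<le> \<beta>"
  proof -
    define u where "u = \<bar>\<theta> - c\<bar>"
    have "\<bar>\<theta>\<bar> \<le> u + \<bar>c\<bar>"
      unfolding u_def using abs_triangle_ineq[of "\<theta> - c" c] by simp
    then have "\<beta> * \<bar>\<theta>\<bar> \<le> \<beta> * u + \<beta> * \<bar>c\<bar>"
      using \<open>0 < \<beta>\<close> by (simp add: distrib_left[symmetric])
    moreover have "u * u = (\<theta> - c)\<^sup>2"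
      by (simp add: u_def power2_eq_square)
    ultimately have "u * u \<le> \<beta> * u"
      using min[of \<theta>] by simp
    have "u \<le> \<beta>"
    proof (cases "u = 0")
      case True
      with \<open>0 < \<beta>\<close> show ?thesis by simp
    next
      case False
      then have "0 < u"
        by (simp add: u_def)
      with \<open>u * u \<le> \<beta> * u\<close> show ?thesis
        by (rule mult_right_le_imp_le)
    qed
    then show ?thesis
      by (simp add: u_def)
  qed
  then have "(\<theta> - c)\<^sup>2 \<le> \<beta>\<^sup>2"
    using \<open>0 < \<beta>\<close> by (simp add: abs_le_square_iff[symmetric])
  ultimately show ?thesis
    by simp
qed

definition weak_count_bound :: "'i set \<Rightarrow> ('i \<Rightarrow> real) \<Rightarrow> real \<Rightarrow> real \<Rightarrow> bool" where
  "weak_count_bound S t q Q \<longleftrightarrow> (\<forall>\<eta>>0. \<eta> powr q * real (card {j\<in>S. t j > \<eta>}) \<le> Q)"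

lemma weak_count_bound_nonneg:
  assumes "weak_count_bound S t q Q"
  shows "0 \<le> Q"
proof -
  have "real (card {j\<in>S. t j > 1}) \<le> Q"
    using assms unfolding weak_count_bound_def by (metis powr_one_eq_one mult_1 zero_less_one)
  then show ?thesis
    using of_nat_0_le_iff order_trans by blast
qed

lemma weak_count_bound_card_le:
  assumes "weak_count_bound S t q Q" "0 < \<eta>"
  shows "real (card {j\<in>S. t j > \<eta>}) \<le> Q / \<eta> powr q"
  using assms by (simp add: weak_count_bound_def pos_le_divide_eq mult.commute)

lemma weak_Lq_ball_imp_weak_count_bound:
  assumes "weak_Lq_ball \<phi> q R f" "S \<subseteq> {1..}"
  shows "weak_count_bound S (\<lambda>j. \<bar>f \<bullet> \<phi> j\<bar>) q (R powr q)"
  unfolding weak_count_bound_def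
proof (intro allI impI)
  fix \<eta> :: real
  assume "0 < \<eta>"
  with assms(1) have fin: "finite {j. j \<ge> 1 \<and> \<bar>f \<bullet> \<phi> j\<bar> > \<eta>}"
    and le: "\<eta> powr q * real (card {j. j \<ge> 1 \<and> \<bar>f \<bullet> \<phi> j\<bar> > \<eta>}) \<le> R powr q"
    unfolding weak_Lq_ball_def by auto
  have "card {j\<in>S. \<bar>f \<bullet> \<phi> j\<bar> > \<eta>} \<le> card {j. j \<ge> 1 \<and> \<bar>f \<bullet> \<phi> j\<bar> > \<eta>}"
    using fin assms(2) by (intro card_mono) auto
  then have "\<eta> powr q * real (card {j\<in>S. \<bar>f \<bullet> \<phi> j\<bar> > \<eta>})
      \<le> \<eta> powr q * real (card {j. j \<ge> 1 \<and> \<bar>f \<bullet> \<phi> j\<bar> > \<eta>})"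
    by (intro mult_left_mono) auto
  with le show "\<eta> powr q * real (card {j\<in>S. \<bar>f \<bullet> \<phi> j\<bar> > \<eta>}) \<le> R powr q"
    by linarith
qed

lemma sum_if_less_eq_card:
  assumes "finite S"
  shows "(\<Sum>j\<in>S. \<Sum>k\<le>M. if t j > e k then w k else (0::real))
       = (\<Sum>k\<le>M. w k * real (card {j\<in>S. t j > e k}))"
proof -
  have "(\<Sum>j\<in>S. \<Sum>k\<le>M. if t j > e k then w k else (0::real))
      = (\<Sum>k\<le>M. \<Sum>j\<in>S. if t j > e k then w k else 0)"
    by (rule sum.swap)
  also have "\<dots> = (\<Sum>k\<le>M. w k * real (card {j\<in>S. t j > e k}))"
    using assms by (simp add: sum.inter_filter[symmetric] mult.commute)
  finally show ?thesis .
qed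

lemma power_powr:
  assumes "0 < (x::real)"
  shows "(x ^ k) powr y = (x powr y) ^ k"
proof -
  have "(x ^ k) powr y = x powr (real k * y)"
    using assms by (simp add: powr_powr flip: powr_realpow)
  also have "\<dots> = (x powr y) ^ k"
    using assms by (simp add: powr_power)
  finally show ?thesis .
qed

lemma threshold_le_dyadic_sum:
  fixes a t :: real
  assumes "0 < a" "t \<le> a * 2 ^ (M + 1)"
  shows "(if t > a then t else 0) \<le> (\<Sum>k\<le>M. if t > a * 2 ^ k then 2 * (a * 2 ^ k) else 0)"
  using assms(2)
proof (induction M)
  case 0
  then show ?case by auto
next
  case (Suc M)
  show ?case
  proof (cases "t \<le> a * 2 ^ (M + 1)")
    case True
    with Suc.IH have "(if t > a then t else 0) \<le> (\<Sum>k\<le>M. if t > a * 2 ^ k then 2 * (a * 2 ^ k) else 0)" .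
    also have "\<dots> \<le> (\<Sum>k\<le>Suc M. if t > a * 2 ^ k then 2 * (a * 2 ^ k) else 0)"
      using assms(1) by simp
    finally show ?thesis .
  next
    case False
    then have "t > a * 2 ^ Suc M"
      by simp
    moreover have "a \<le> a * 2 ^ Suc M"
      using assms(1) one_le_power[of "2::real" "Suc M"] by simp
    ultimately have "(if t > a then t else 0) \<le> 2 * (a * 2 ^ Suc M)"
      using Suc.prems by auto
    moreover have "0 \<le> (\<Sum>k\<le>M. if t > a * 2 ^ k then 2 * (a * 2 ^ k) else (0::real))"
      using assms(1) by (intro sum_nonneg) auto
    ultimately show ?thesis
      using \<open>t > a * 2 ^ Suc M\<close> by simp
  qed
qed

lemma min_sq_le_dyadic_sum:
  fixes b t :: real
  assumes "0 < b" "0 \<le> t" "t = 0 \<or> t > b / 2 ^ (M + 1)"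
  shows "min (t\<^sup>2) (b\<^sup>2) \<le> (\<Sum>k\<le>M. if t > b / 2 ^ (k + 1) then 4 * (b / 2 ^ (k + 1))\<^sup>2 else 0)"
  using assms(3)
proof (induction M)
  case 0
  then show ?case
    using assms(1,2) by (auto simp: power2_eq_square min_def)
next
  case (Suc M)
  show ?case
  proof (cases "t = 0 \<or> t > b / 2 ^ (M + 1)")
    case True
    with Suc.IH have "min (t\<^sup>2) (b\<^sup>2) \<le> (\<Sum>k\<le>M. if t > b / 2 ^ (k + 1) then 4 * (b / 2 ^ (k + 1))\<^sup>2 else 0)" .
    also have "\<dots> \<le> (\<Sum>k\<le>Suc M. if t > b / 2 ^ (k + 1) then 4 * (b / 2 ^ (k + 1))\<^sup>2 else 0)"
      by simp
    finally show ?thesis .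
  next
    case False
    then have "t \<le> b / 2 ^ (M + 1)" and above: "t > b / 2 ^ (Suc M + 1)"
      using Suc.prems by auto
    then have "min (t\<^sup>2) (b\<^sup>2) \<le> (b / 2 ^ (M + 1))\<^sup>2"
      using assms(2) by (simp add: min.coboundedI1 power_mono)
    also have "\<dots> = 4 * (b / 2 ^ (Suc M + 1))\<^sup>2"
      by (simp add: power2_eq_square field_simps)
    finally have "min (t\<^sup>2) (b\<^sup>2) \<le> 4 * (b / 2 ^ (Suc M + 1))\<^sup>2" .
    moreover have "0 \<le> (\<Sum>k\<le>M. if t > b / 2 ^ (k + 1) then 4 * (b / 2 ^ (k + 1))\<^sup>2 else (0::real))"
      by (intro sum_nonneg) auto
    ultimately show ?thesis
      using above by simp
  qed
qed

lemma sum_above_threshold_le_weak_count: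
  fixes t :: "'i \<Rightarrow> real"
  assumes S: "finite S" and "0 < a" "1 < q" and count: "weak_count_bound S t q Q"
  shows "(\<Sum>j\<in>S. if t j > a then t j else 0) \<le> 2 * Q * a powr (1 - q) / (1 - 2 powr (1 - q))"
proof -
  obtain M where "Max (insert 0 (t ` S)) / a < 2 ^ M"
    using real_arch_pow[of 2] by auto
  then have "Max (insert 0 (t ` S)) \<le> a * 2 ^ M"
    using \<open>0 < a\<close> by (simp add: pos_divide_less_eq mult.commute)
  also have "\<dots> \<le> a * 2 ^ (M + 1)"
    using \<open>0 < a\<close> by simp
  finally have "Max (insert 0 (t ` S)) \<le> a * 2 ^ (M + 1)" .
  then have bounded: "t j \<le> a * 2 ^ (M + 1)" if "j \<in> S" for j
    using S that Max_ge[of "insert 0 (t ` S)" "t j"] by simp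
  define x where "x = (2::real) powr (1 - q)"
  have "0 < x" "x < 1"
    using \<open>1 < q\<close> by (auto simp: x_def intro: powr_less_one)
  have "(\<Sum>j\<in>S. if t j > a then t j else 0)
      \<le> (\<Sum>j\<in>S. \<Sum>k\<le>M. if t j > a * 2 ^ k then 2 * (a * 2 ^ k) else 0)"
    using bounded \<open>0 < a\<close> by (intro sum_mono threshold_le_dyadic_sum)
  also have "\<dots> = (\<Sum>k\<le>M. 2 * (a * 2 ^ k) * real (card {j\<in>S. t j > a * 2 ^ k}))"
    using S by (rule sum_if_less_eq_card)
  also have "\<dots> \<le> (\<Sum>k\<le>M. 2 * Q * a powr (1 - q) * x ^ k)"
  proof (rule sum_mono)
    fix k
    have e: "0 < a * 2 ^ k"
      using \<open>0 < a\<close> by simp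
    have "2 * (a * 2 ^ k) * real (card {j\<in>S. t j > a * 2 ^ k}) \<le> 2 * (a * 2 ^ k) * (Q / (a * 2 ^ k) powr q)"
      using weak_count_bound_card_le[OF count e] e by (intro mult_left_mono) auto
    also have "\<dots> = 2 * Q * (a * 2 ^ k) powr (1 - q)"
      using e by (simp add: powr_diff)
    also have "\<dots> = 2 * Q * a powr (1 - q) * x ^ k"
      using \<open>0 < a\<close> by (simp add: powr_mult power_powr x_def)
    finally show "2 * (a * 2 ^ k) * real (card {j\<in>S. t j > a * 2 ^ k}) \<le> 2 * Q * a powr (1 - q) * x ^ k" .
  qed
  also have "\<dots> = 2 * Q * a powr (1 - q) * (\<Sum>k\<le>M. x ^ k)"
    by (simp add: sum_distrib_left)
  also have "\<dots> \<le> 2 * Q * a powr (1 - q) * (1 / (1 - x))"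
    using geometric_sum_less[OF \<open>0 < x\<close> \<open>x < 1\<close>, of "{..M}"] weak_count_bound_nonneg[OF count]
    by (intro mult_left_mono) auto
  finally show ?thesis
    by (simp add: x_def)
qed

lemma sum_min_sq_le_weak_count:
  fixes t :: "'i \<Rightarrow> real"
  assumes S: "finite S" and nonneg: "\<And>j. j \<in> S \<Longrightarrow> 0 \<le> t j" and "0 < b" "q < 2"
    and count: "weak_count_bound S t q Q"
  shows "(\<Sum>j\<in>S. min ((t j)\<^sup>2) (b\<^sup>2))
    \<le> 4 * Q * b powr (2 - q) * (1/2) powr (2 - q) / (1 - (1/2) powr (2 - q))"
proof -
  obtain M where M: "\<forall>j\<in>S. t j = 0 \<or> t j > b / 2 ^ (M + 1)"
  proof (cases "{j\<in>S. t j > 0} = {}")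
    case True
    with nonneg that[of 0] show ?thesis
      by force
  next
    case False
    define m where "m = Min (t ` {j\<in>S. t j > 0})"
    have "0 < m" and m_le: "\<forall>j\<in>S. t j > 0 \<longrightarrow> m \<le> t j"
      using False S by (auto simp: m_def)
    obtain n where "b / m < 2 ^ n"
      using real_arch_pow[of 2 "b / m"] by auto
    with \<open>0 < m\<close> have "b < m * 2 ^ n"
      by (simp add: pos_divide_less_eq mult.commute)
    also have "\<dots> \<le> m * 2 ^ (n + 1)"
      using \<open>0 < m\<close> by simp
    finally have "b / 2 ^ (n + 1) < m"
      by (simp add: divide_less_eq)
    with m_le nonneg that[of n] show ?thesis
      by force
  qed
  define z where "z = ((1::real) / 2) powr (2 - q)"
  have "((1::real) / 2) powr (2 - q) < (1 / 2) powr 0"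
    using \<open>q < 2\<close> by (intro powr_less_mono') auto
  then have "0 < z" "z < 1"
    by (auto simp: z_def)
  have "(\<Sum>j\<in>S. min ((t j)\<^sup>2) (b\<^sup>2))
      \<le> (\<Sum>j\<in>S. \<Sum>k\<le>M. if t j > b / 2 ^ (k + 1) then 4 * (b / 2 ^ (k + 1))\<^sup>2 else 0)"
    using M nonneg \<open>0 < b\<close> by (intro sum_mono min_sq_le_dyadic_sum) auto
  also have "\<dots> = (\<Sum>k\<le>M. 4 * (b / 2 ^ (k + 1))\<^sup>2 * real (card {j\<in>S. t j > b / 2 ^ (k + 1)}))"
    using S by (rule sum_if_less_eq_card)
  also have "\<dots> \<le> (\<Sum>k\<le>M. 4 * Q * b powr (2 - q) * z * z ^ k)"
  proof (rule sum_mono)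
    fix k
    define e where "e = b / 2 ^ (k + 1)"
    have e: "0 < e"
      using \<open>0 < b\<close> by (simp add: e_def)
    have "4 * e\<^sup>2 * real (card {j\<in>S. t j > e}) \<le> 4 * e\<^sup>2 * (Q / e powr q)"
      using weak_count_bound_card_le[OF count e] by (intro mult_left_mono) auto
    also have "\<dots> = 4 * Q * e powr (2 - q)"
      using e by (simp add: powr_diff powr_realpow)
    also have "\<dots> = 4 * Q * b powr (2 - q) * z * z ^ k"
    proof -
      have e_eq: "e = b * (1 / 2) ^ (k + 1)"
        by (simp add: e_def power_one_over)
      have "e powr (2 - q) = b powr (2 - q) * ((1 / 2) ^ (k + 1)) powr (2 - q)"
        unfolding e_eq by (rule powr_mult)
      also have "((1 / 2 :: real) ^ (k + 1)) powr (2 - q) = z ^ (k + 1)"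
        unfolding z_def by (rule power_powr) simp
      finally show ?thesis
        by simp
    qed
    finally show "4 * (b / 2 ^ (k + 1))\<^sup>2 * real (card {j\<in>S. t j > b / 2 ^ (k + 1)})
        \<le> 4 * Q * b powr (2 - q) * z * z ^ k"
      by (simp add: e_def)
  qed
  also have "\<dots> = 4 * Q * b powr (2 - q) * z * (\<Sum>k\<le>M. z ^ k)"
    by (simp add: sum_distrib_left)
  also have "\<dots> \<le> 4 * Q * b powr (2 - q) * z * (1 / (1 - z))"
    using geometric_sum_less[OF \<open>0 < z\<close> \<open>z < 1\<close>, of "{..M}"] weak_count_bound_nonneg[OF count] \<open>0 < z\<close>
    by (intro mult_left_mono) auto
  finally show ?thesis
    by (simp add: z_def)
qed

definition lasso_L1_const :: "real \<Rightarrow> real" where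
  "lasso_L1_const q = 4 / (2 powr (1 - q) * (1 - 2 powr (1 - q)))"

definition lasso_error_const :: "real \<Rightarrow> real" where
  "lasso_error_const q = 4 * (1 / 2) powr (2 - q) / (1 - (1 / 2) powr (2 - q))"

lemma lasso_L1_const_pos:
  assumes "1 < q"
  shows "0 < lasso_L1_const q"
proof -
  have "(2::real) powr (1 - q) < 1"
    using assms by (intro powr_less_one) auto
  then show ?thesis
    by (simp add: lasso_L1_const_def)
qed

lemma lasso_error_const_pos:
  assumes "q < 2"
  shows "0 < lasso_error_const q"
proof -
  have "((1::real) / 2) powr (2 - q) < (1 / 2) powr 0"
    using assms by (intro powr_less_mono') auto
  then show ?thesis
    by (simp add: lasso_error_const_def)
qed

lemma besov_ball_tail_le:
  assumes "orthonormal_basis \<phi>" "besov_ball \<phi> r R f" "0 \<le> R"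
  shows "sqrt ((norm f)\<^sup>2 - (\<Sum>j=1..p. (f \<bullet> \<phi> j)\<^sup>2)) \<le> R * real (p + 1) powr (- r)"
proof -
  define P where "P = real (p + 1) powr r"
  have "0 < P"
    by (simp add: P_def)
  have "real (p + 1) powr (2 * r) = P\<^sup>2"
    by (simp add: P_def power2_eq_square flip: powr_add)
  with assms(2) have "P\<^sup>2 * ((norm f)\<^sup>2 - (\<Sum>j=1..p. (f \<bullet> \<phi> j)\<^sup>2)) \<le> R\<^sup>2"
    unfolding besov_ball_def orthonormal_basis_tail_sum[OF assms(1), symmetric] by (metis le_add2)
  then have "(norm f)\<^sup>2 - (\<Sum>j=1..p. (f \<bullet> \<phi> j)\<^sup>2) \<le> (R / P)\<^sup>2"
    using \<open>0 < P\<close> by (simp add: power_divide pos_le_divide_eq mult.commute)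
  then have "sqrt ((norm f)\<^sup>2 - (\<Sum>j=1..p. (f \<bullet> \<phi> j)\<^sup>2)) \<le> R / P"
    using \<open>0 < P\<close> \<open>0 \<le> R\<close> by (simp add: real_le_lsqrt)
  then show ?thesis
    by (simp add: P_def powr_minus_divide)
qed

lemma L1_norm_penalized_min_le:
  assumes ON: "orthonormal_seq \<phi>" and "1 < q" "0 < \<beta>"
    and f: "weak_Lq_ball \<phi> q R f" and min: "is_L1_penalized_min \<phi> p \<beta> f h"
  shows "L1_norm \<phi> p h \<le> lasso_L1_const q * R powr q * \<beta> powr (1 - q)"
proof -
  obtain c where h: "h = (\<Sum>j=1..p. c j *\<^sub>R \<phi> j)"
    using min by (auto simp: is_L1_penalized_min_def L1_space_def)
  define t where "t j = \<bar>f \<bullet> \<phi> j\<bar>" for j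
  define x where "x = (2::real) powr (1 - q)"
  have "0 < x" "x < 1"
    using \<open>1 < q\<close> by (auto simp: x_def intro: powr_less_one)
  have coeff: "\<bar>c j\<bar> \<le> 2 * (if t j > \<beta> / 2 then t j else 0)" if "j \<in> {1..p}" for j
  proof -
    have "(f \<bullet> \<phi> j - c j)\<^sup>2 + \<beta> * \<bar>c j\<bar> \<le> (f \<bullet> \<phi> j)\<^sup>2"
      using penalized_min_coordinatewise[OF ON min[unfolded h] that, of 0] by simp
    from scalar_lasso_abs_le[OF \<open>0 < \<beta>\<close> this] show ?thesis
      by (simp only: t_def)
  qed
  have "L1_norm \<phi> p h = (\<Sum>j=1..p. \<bar>c j\<bar>)"
    unfolding h by (rule L1_norm_expansion[OF ON])
  also have "\<dots> \<le> 2 * (\<Sum>j=1..p. if t j > \<beta> / 2 then t j else 0)"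
    unfolding sum_distrib_left by (intro sum_mono coeff)
  also have "\<dots> \<le> 2 * (2 * R powr q * (\<beta> / 2) powr (1 - q) / (1 - x))"
  proof -
    have "(\<Sum>j=1..p. if t j > \<beta> / 2 then t j else 0) \<le> 2 * R powr q * (\<beta> / 2) powr (1 - q) / (1 - x)"
      unfolding t_def x_def using \<open>0 < \<beta>\<close>
      by (intro sum_above_threshold_le_weak_count \<open>1 < q\<close> weak_Lq_ball_imp_weak_count_bound[OF f]) auto
    then show ?thesis
      by simp
  qed
  also have "\<dots> = 4 / (x * (1 - x)) * R powr q * \<beta> powr (1 - q)"
    using \<open>0 < x\<close> \<open>x < 1\<close> by (simp add: powr_divide x_def field_simps)
  finally show ?thesis
    by (simp add: lasso_L1_const_def x_def)
qed

lemma norm_diff_penalized_min_le: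
  assumes basis: "orthonormal_basis \<phi>" and "q < 2" "0 < \<beta>" "0 < R"
    and f: "weak_Lq_ball \<phi> q R f" "besov_ball \<phi> r R f" and min: "is_L1_penalized_min \<phi> p \<beta> f h"
  shows "norm (f - h) \<le> R * real (p + 1) powr (- r)
    + sqrt (lasso_error_const q) * R powr (q / 2) * \<beta> powr (1 - q / 2)"
proof -
  have ON: "orthonormal_seq \<phi>"
    using basis by (rule orthonormal_basis_imp_orthonormal_seq)
  obtain c where h: "h = (\<Sum>j=1..p. c j *\<^sub>R \<phi> j)"
    using min by (auto simp: is_L1_penalized_min_def L1_space_def)
  define C where "C = lasso_error_const q"
  define A where "A = (norm f)\<^sup>2 - (\<Sum>j=1..p. (f \<bullet> \<phi> j)\<^sup>2)"
  define B where "B = (\<Sum>j=1..p. (f \<bullet> \<phi> j - c j)\<^sup>2)"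
  have "(norm (f - h))\<^sup>2 = A + B"
    unfolding h A_def B_def by (rule norm_diff_expansion_sq[OF ON]) auto
  then have "norm (f - h) = sqrt (A + B)"
    by (metis norm_ge_zero real_sqrt_unique)
  also have "\<dots> \<le> sqrt A + sqrt B"
  proof (rule sqrt_add_le_add_sqrt)
    show "0 \<le> A"
      unfolding A_def using bessel_inequality[OF ON, of "{1..p}" f] by auto
    show "0 \<le> B"
      unfolding B_def by (simp add: sum_nonneg)
  qed
  finally have "norm (f - h) \<le> sqrt A + sqrt B" .
  moreover have "sqrt A \<le> R * real (p + 1) powr (- r)"
    unfolding A_def using basis f(2) \<open>0 < R\<close> by (intro besov_ball_tail_le) auto
  moreover have "sqrt B \<le> sqrt C * R powr (q / 2) * \<beta> powr (1 - q / 2)"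
  proof -
    have residual: "(f \<bullet> \<phi> j - c j)\<^sup>2 \<le> min (\<bar>f \<bullet> \<phi> j\<bar>\<^sup>2) (\<beta>\<^sup>2)" if "j \<in> {1..p}" for j
      using scalar_lasso_residual_le[OF \<open>0 < \<beta>\<close> penalized_min_coordinatewise[OF ON min[unfolded h] that]]
      by simp
    have "B \<le> (\<Sum>j=1..p. min (\<bar>f \<bullet> \<phi> j\<bar>\<^sup>2) (\<beta>\<^sup>2))"
      unfolding B_def by (intro sum_mono residual)
    also have "\<dots> \<le> C * R powr q * \<beta> powr (2 - q)"
      using sum_min_sq_le_weak_count[OF finite_atLeastAtMost _ \<open>0 < \<beta>\<close> \<open>q < 2\<close>
          weak_Lq_ball_imp_weak_count_bound[OF f(1)], of 1 p]
      by (simp add: C_def lasso_error_const_def mult_ac)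
    finally have "sqrt B \<le> sqrt (C * R powr q * \<beta> powr (2 - q))"
      by (rule real_sqrt_le_mono)
    also have "\<dots> = sqrt C * R powr (q / 2) * \<beta> powr ((2 - q) / 2)"
      using \<open>0 < R\<close> \<open>0 < \<beta>\<close> by (simp add: real_sqrt_mult powr_half_sqrt_powr)
    also have "(2 - q) / 2 = 1 - q / 2"
      by simp
    finally show ?thesis .
  qed
  ultimately show ?thesis
    by (simp add: C_def)
qed

theorem lemma8p5:
  fixes q :: real
  assumes "1 < q" and "q < 2"
  shows "\<exists>C>0. \<forall>(\<phi>::nat \<Rightarrow> 'a::{real_inner,complete_space}) r R f p \<beta> h.
           orthonormal_basis \<phi> \<and> r > 0 \<and> R > 0 \<and>
           weak_Lq_ball \<phi> q R f \<and> besov_ball \<phi> r R f \<and>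
           p \<ge> 1 \<and> \<beta> > 0 \<and> is_L1_penalized_min \<phi> p \<beta> f h \<longrightarrow>
             L1_norm \<phi> p h \<le> C * R powr q * \<beta> powr (1 - q) \<and>
             norm (f - h) \<le> R * real (p + 1) powr (- r) + sqrt C * R powr (q / 2) * \<beta> powr (1 - q / 2)"
proof -
  define C where "C = lasso_L1_const q + lasso_error_const q"
  have C1: "0 < lasso_L1_const q" and C2: "0 < lasso_error_const q"
    using assms by (simp_all add: lasso_L1_const_pos lasso_error_const_pos)
  have "L1_norm \<phi> p h \<le> C * R powr q * \<beta> powr (1 - q) \<and>
      norm (f - h) \<le> R * real (p + 1) powr (- r) + sqrt C * R powr (q / 2) * \<beta> powr (1 - q / 2)"
    if "orthonormal_basis \<phi> \<and> r > 0 \<and> R > 0 \<and> weak_Lq_ball \<phi> q R f \<and> besov_ball \<phi> r R f \<and>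
      p \<ge> 1 \<and> \<beta> > 0 \<and> is_L1_penalized_min \<phi> p \<beta> f h"
    for \<phi> :: "nat \<Rightarrow> 'a" and r R f p \<beta> h
  proof
    from that have basis: "orthonormal_basis \<phi>" and "0 < R" "0 < \<beta>" and f: "weak_Lq_ball \<phi> q R f"
      "besov_ball \<phi> r R f" and min: "is_L1_penalized_min \<phi> p \<beta> f h"
      by auto
    have "L1_norm \<phi> p h \<le> lasso_L1_const q * R powr q * \<beta> powr (1 - q)"
      using orthonormal_basis_imp_orthonormal_seq[OF basis] assms(1) \<open>0 < \<beta>\<close> f(1) min
      by (rule L1_norm_penalized_min_le)
    also have "\<dots> \<le> C * R powr q * \<beta> powr (1 - q)"
      using C2 by (intro mult_right_mono) (auto simp: C_def)
    finally show "L1_norm \<phi> p h \<le> C * R powr q * \<beta> powr (1 - q)" .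
    have "sqrt (lasso_error_const q) \<le> sqrt C"
      using C1 by (simp add: C_def)
    then show "norm (f - h) \<le> R * real (p + 1) powr (- r) + sqrt C * R powr (q / 2) * \<beta> powr (1 - q / 2)"
      using norm_diff_penalized_min_le[OF basis assms(2) \<open>0 < \<beta>\<close> \<open>0 < R\<close> f min]
      by (smt (verit) mult_right_mono powr_ge_zero)
  qed
  moreover have "0 < C"
    using C1 C2 by (simp add: C_def)
  ultimately show ?thesis
    by blast
qed

end
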